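(* Let $\mu$ be a probability measure on $\{0,1\}^{\mathbb{N}}$ with negatively correlated coordinates, i.e. $X\sim\mu$ satisfies $\mathbb{E}[X_iX_j]\le \mathbb{E}[X_i]\mathbb{E}[X_j]$ for all $i\neq j$ in $\mathbb{N}$, and let $\tilde\mu$ be its product version. Then $$\Delta_n(\mu)\ \ge\ \tfrac14\,\Delta_n(\tilde\mu)\qquad\text{for all } n\ge 1.$$
   Context: For a probability measure $\mu$ on $\{0,1\}^{\mathbb{N}}$ and $n\ge1$, let $X^{(1)},\dots,X^{(n)}$ be i.i.d. samples from $\mu$ and define $\Delta_n(\mu):=\mathbb{E}\sup_{j\in\mathbb{N}}\left|\frac1n\sum_{i=1}^n X^{(i)}_j-\mathbb{E}_{X\sim\mu}[X_j]\right|$. The product version $\tilde\mu$ of $\mu$ is the product measure on $\{0,1\}^{\mathbb{N}}$ whose one-dimensional marginals agree with those of $\mu$ (i.e. the coordinates are independent with the same marginal laws as under $\mu$). *)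

theory Defs
  imports "HOL-Probability.Probability"
begin

text \<open>The cube \{0,1\}^N, coordinates encoded as booleans (True = 1).\<close>
definition cube :: "(nat \<Rightarrow> bool) measure" where
  "cube = Pi\<^sub>M UNIV (\<lambda>_::nat. count_space (UNIV :: bool set))"

definition coord_mean :: "(nat \<Rightarrow> bool) measure \<Rightarrow> nat \<Rightarrow> real" where
  "coord_mean \<mu> j = (\<integral>x. of_bool (x j) \<partial>\<mu>)"

definition Delta :: "nat \<Rightarrow> (nat \<Rightarrow> bool) measure \<Rightarrow> real" where
  "Delta n \<mu> = (\<integral>xs. (SUP j. \<bar>(\<Sum>i<n. of_bool (xs i j)) / real n - coord_mean \<mu> j\<bar>)
                  \<partial>(Pi\<^sub>M {..<n} (\<lambda>_. \<mu>)))"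

definition product_version :: "(nat \<Rightarrow> bool) measure \<Rightarrow> (nat \<Rightarrow> bool) measure" where
  "product_version \<mu> = Pi\<^sub>M UNIV (\<lambda>j. distr \<mu> (count_space UNIV) (\<lambda>x. x j))"

definition neg_correlated :: "(nat \<Rightarrow> bool) measure \<Rightarrow> bool" where
  "neg_correlated \<mu> \<longleftrightarrow> (\<forall>i j. i \<noteq> j \<longrightarrow>
     (\<integral>x. of_bool (x i) * of_bool (x j) \<partial>\<mu>) \<le> coord_mean \<mu> i * coord_mean \<mu> j)"

end

theory Submission
  imports Defs
begin

(*
  Fix a sign sigma = 1 or -1 and a level t > 0. The one-sided maximal deviation exceeds t
  iff some event E_j = {sigma (empirical mean of coordinate j - E X_j) > t} occurs. Each E_j
  depends only on the number of ones in column j of the sample, so it has the same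
  probability s_j under mu and under its product version. Under the product version the
  union bound gives P(union E_j) <= min 1 (sum s_j). Under mu the events are pairwise
  negatively correlated: for coordinates a, b the pairs (X_a, X_b) of the n samples are
  i.i.d. and negatively correlated, and monotone functions of the two column sums inherit
  this. The second-moment method then gives P(union E_j) >= s / (1 + s) >= min 1 s / 2.
  Integrating over t, each one-sided deviation has at most twice the expectation under
  the product version, and the two-sided deviation lies between the larger and the sum of
  the two one-sided ones, which costs another factor 2.
*)

section \<open>Negative association of sums of i.i.d. pairs\<close>

lemma integrable_finite_count_space:
  fixes f :: "'a::finite \<Rightarrow> real"
  assumes "finite_measure \<nu>" and sets: "sets \<nu> = sets (count_space UNIV)"
  shows "integrable \<nu> f"
proof -
  interpret finite_measure \<nu> by fact
  have "norm (f x) \<le> (\<Sum>y\<in>UNIV. \<bar>f y\<bar>)" for x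
    by (simp, rule member_le_sum) auto
  then show ?thesis
    by (intro integrable_const_bound) (auto simp: measurable_cong_sets[OF sets refl])
qed

lemma integral_bool_pair_mult_le:
  fixes \<nu> :: "(bool \<times> bool) measure" and u v :: "bool \<Rightarrow> real"
  assumes \<nu>: "prob_space \<nu>" "sets \<nu> = sets (count_space UNIV)"
    and neg_cov: "(\<integral>z. (of_bool (fst z) * of_bool (snd z) :: real) \<partial>\<nu>)
                    \<le> (\<integral>z. of_bool (fst z) \<partial>\<nu>) * (\<integral>z. of_bool (snd z) \<partial>\<nu>)"
    and same_direction: "0 \<le> (u True - u False) * (v True - v False)"
  shows "(\<integral>z. u (fst z) * v (snd z) \<partial>\<nu>) \<le> (\<integral>z. u (fst z) \<partial>\<nu>) * (\<integral>z. v (snd z) \<partial>\<nu>)"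
proof -
  interpret prob_space \<nu> by fact
  have int: "integrable \<nu> f" for f :: "bool \<times> bool \<Rightarrow> real"
    using \<nu> by (intro integrable_finite_count_space) auto
  define du dv where "du = u True - u False" and "dv = v True - v False"
  define ea eb eab :: real where "ea = (\<integral>z. of_bool (fst z) \<partial>\<nu>)" and "eb = (\<integral>z. of_bool (snd z) \<partial>\<nu>)"
    and "eab = (\<integral>z. of_bool (fst z) * of_bool (snd z) \<partial>\<nu>)"
  have u: "u c = u False + du * of_bool c" and v: "v c = v False + dv * of_bool c" for c
    by (auto simp: du_def dv_def)
  have "(\<integral>z. u (fst z) * v (snd z) \<partial>\<nu>)
      = (\<integral>z. u False * v False + u False * dv * of_bool (snd z) + du * v False * of_bool (fst z)
              + du * dv * (of_bool (fst z) * of_bool (snd z)) \<partial>\<nu>)"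
    by (intro Bochner_Integration.integral_cong refl) (subst u, subst v, simp add: algebra_simps)
  also have "\<dots> = u False * v False + u False * dv * eb + du * v False * ea + du * dv * eab"
    by (simp add: int prob_space ea_def eb_def eab_def)
  also have "du * dv * eab \<le> du * dv * (ea * eb)"
    using neg_cov same_direction by (intro mult_left_mono) (auto simp: ea_def eb_def eab_def du_def dv_def)
  also have "u False * v False + u False * dv * eb + du * v False * ea + du * dv * (ea * eb)
      = (\<integral>z. u (fst z) \<partial>\<nu>) * (\<integral>z. v (snd z) \<partial>\<nu>)"
    by (subst (1 2) u, subst (1 2) v) (simp add: int prob_space ea_def eb_def algebra_simps)
  finally show ?thesis by simp
qed

lemma mono_integral_translate:
  fixes h :: "real \<Rightarrow> real" and f :: "'a \<Rightarrow> real"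
  assumes "mono h" and "\<And>t. integrable M (\<lambda>y. h (f y + t))"
  shows "mono (\<lambda>t. \<integral>y. h (f y + t) \<partial>M)"
  using assms by (intro monoI Bochner_Integration.integral_mono) (auto intro: monoD[OF assms(1)])

lemma antimono_integral_translate:
  fixes h :: "real \<Rightarrow> real" and f :: "'a \<Rightarrow> real"
  assumes "antimono h" and "\<And>t. integrable M (\<lambda>y. h (f y + t))"
  shows "antimono (\<lambda>t. \<integral>y. h (f y + t) \<partial>M)"
  using assms by (intro antimonoI Bochner_Integration.integral_mono) (auto intro: antimonoD[OF assms(1)])

lemma borel_measurable_mono_or_antimono:
  fixes h :: "real \<Rightarrow> real"
  assumes "mono h \<or> antimono h"
  shows "h \<in> borel_measurable borel"
proof (cases "mono h")
  case False
  then have "mono (\<lambda>x. - h x)"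
    using assms by (auto simp: mono_def antimono_def)
  then have "(\<lambda>x. - (- h x)) \<in> borel_measurable borel"
    by (intro borel_measurable_uminus borel_measurable_mono)
  then show ?thesis by simp
qed (rule borel_measurable_mono)

lemma borel_measurable_PiM_sum_count_space:
  fixes c :: "'a \<Rightarrow> real"
  assumes "sets \<nu> = sets (count_space UNIV)"
  shows "(\<lambda>\<omega>. \<Sum>k\<in>I. c (\<omega> k)) \<in> borel_measurable (PiM I (\<lambda>_. \<nu>))"
proof (intro borel_measurable_sum)
  fix k assume "k \<in> I"
  moreover have "c \<in> borel_measurable \<nu>"
    by (simp add: measurable_cong_sets[OF assms refl])
  ultimately show "(\<lambda>\<omega>. c (\<omega> k)) \<in> borel_measurable (PiM I (\<lambda>_. \<nu>))"
    by (intro measurable_compose[OF measurable_component_singleton])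
qed

lemma sum_insert_fun_upd:
  assumes "finite I" "i \<notin> I"
  shows "(\<Sum>k\<in>insert i I. f ((x(i := y)) k)) = f y + (\<Sum>k\<in>I. f (x k))"
proof -
  have "(\<Sum>k\<in>I. f ((x(i := y)) k)) = (\<Sum>k\<in>I. f (x k))"
    using assms(2) by (intro sum.cong) auto
  then show ?thesis
    using assms by simp
qed

lemma nn_integral_PiM_insert_sums:
  fixes c d :: "'b \<Rightarrow> real" and F :: "real \<Rightarrow> real \<Rightarrow> ennreal"
  assumes "prob_space \<nu>" "finite I" "i \<notin> I"
    and "(\<lambda>\<omega>. F (\<Sum>k\<in>insert i I. c (\<omega> k)) (\<Sum>k\<in>insert i I. d (\<omega> k)))
           \<in> borel_measurable (PiM (insert i I) (\<lambda>_. \<nu>))"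
  shows "(\<integral>\<^sup>+\<omega>. F (\<Sum>k\<in>insert i I. c (\<omega> k)) (\<Sum>k\<in>insert i I. d (\<omega> k)) \<partial>PiM (insert i I) (\<lambda>_. \<nu>))
       = (\<integral>\<^sup>+x. (\<integral>\<^sup>+y. F (c y + (\<Sum>k\<in>I. c (x k))) (d y + (\<Sum>k\<in>I. d (x k))) \<partial>\<nu>) \<partial>PiM I (\<lambda>_. \<nu>))"
proof -
  interpret product_sigma_finite "\<lambda>_. \<nu>"
    using assms(1) by (simp add: product_sigma_finite_def prob_space_imp_sigma_finite)
  show ?thesis
    by (subst product_nn_integral_insert[OF assms(2-4)]) (simp only: sum_insert_fun_upd[OF assms(2,3)])
qed

lemma mult_diff_nonneg_if_same_monotonicity:
  fixes h g :: "real \<Rightarrow> real"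
  assumes "(mono h \<and> mono g) \<or> (antimono h \<and> antimono g)" and "a \<le> a'" "b \<le> b'"
  shows "0 \<le> (h a' - h a) * (g b' - g b)"
  using assms(1)
proof
  assume "mono h \<and> mono g"
  then have "h a \<le> h a'" "g b \<le> g b'"
    using assms(2,3) by (auto dest: monoD)
  then show ?thesis by simp
next
  assume "antimono h \<and> antimono g"
  then have "h a' \<le> h a" "g b' \<le> g b"
    using assms(2,3) by (auto dest: antimonoD)
  then show ?thesis by (simp add: mult_nonpos_nonpos)
qed

text \<open>Induction on \<open>I\<close>: integrating out one coordinate reduces the claim to the two-point
  inequality above and turns \<open>h\<close> and \<open>g\<close> into averaged translates that are still equally monotone.\<close>
lemma nn_integral_PiM_sums_neg_assoc:
  fixes \<nu> :: "(bool \<times> bool) measure" and h g :: "real \<Rightarrow> real"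
  assumes \<nu>: "prob_space \<nu>" "sets \<nu> = sets (count_space UNIV)"
    and neg_cov: "(\<integral>z. (of_bool (fst z) * of_bool (snd z) :: real) \<partial>\<nu>)
                    \<le> (\<integral>z. of_bool (fst z) \<partial>\<nu>) * (\<integral>z. of_bool (snd z) \<partial>\<nu>)"
    and "finite I"
    and "(mono h \<and> mono g) \<or> (antimono h \<and> antimono g)" and "\<And>s. 0 \<le> h s" "\<And>s. 0 \<le> g s"
  shows "(\<integral>\<^sup>+\<omega>. ennreal (h (\<Sum>k\<in>I. of_bool (fst (\<omega> k))) * g (\<Sum>k\<in>I. of_bool (snd (\<omega> k))))
            \<partial>PiM I (\<lambda>_. \<nu>))
         \<le> (\<integral>\<^sup>+\<omega>. ennreal (h (\<Sum>k\<in>I. of_bool (fst (\<omega> k)))) \<partial>PiM I (\<lambda>_. \<nu>))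
           * (\<integral>\<^sup>+\<omega>. ennreal (g (\<Sum>k\<in>I. of_bool (snd (\<omega> k)))) \<partial>PiM I (\<lambda>_. \<nu>))"
  using assms(4-7)
proof (induction I arbitrary: h g rule: finite_induct)
  case empty
  interpret prob_space "PiM {} (\<lambda>_. \<nu>)"
    using \<nu>(1) by (intro prob_space_PiM) auto
  show ?case
    using empty.prems(2,3) by (simp add: emeasure_space_1 ennreal_mult)
next
  case (insert i I)
  interpret prob_space \<nu> by fact
  have int: "integrable \<nu> f" for f :: "bool \<times> bool \<Rightarrow> real"
    using \<nu> by (intro integrable_finite_count_space) auto
  define a b :: "('a \<Rightarrow> bool \<times> bool) \<Rightarrow> real"
    where "a x = (\<Sum>k\<in>I. of_bool (fst (x k)))" and "b x = (\<Sum>k\<in>I. of_bool (snd (x k)))"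
    for x
  define H G where "H t = (\<integral>y. h (of_bool (fst y) + t) \<partial>\<nu>)" and "G t = (\<integral>y. g (of_bool (snd y) + t) \<partial>\<nu>)"
    for t
  have HG: "(mono H \<and> mono G) \<or> (antimono H \<and> antimono G)"
    using insert.prems(1) unfolding H_def G_def
    by (auto intro!: mono_integral_translate antimono_integral_translate int)
  have H0: "0 \<le> H t" and G0: "0 \<le> G t" for t
    unfolding H_def G_def using insert.prems(2,3) by (auto intro: Bochner_Integration.integral_nonneg)
  have pair: "(\<integral>y. h (of_bool (fst y) + s) * g (of_bool (snd y) + r) \<partial>\<nu>) \<le> H s * G r" for s r
    unfolding H_def G_def
  proof (rule integral_bool_pair_mult_le[OF \<nu> neg_cov, where u="\<lambda>c. h (of_bool c + s)" and v="\<lambda>c. g (of_bool c + r)"])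
    show "0 \<le> (h (of_bool True + s) - h (of_bool False + s)) * (g (of_bool True + r) - g (of_bool False + r))"
      using mult_diff_nonneg_if_same_monotonicity[OF insert.prems(1), of s "1 + s" r "1 + r"] by simp
  qed
  have [measurable]: "h \<in> borel_measurable borel" "g \<in> borel_measurable borel"
    using insert.prems(1) by (auto intro: borel_measurable_mono_or_antimono)
  have [measurable]: "(\<lambda>\<omega>. \<Sum>k\<in>J. of_bool (fst (\<omega> k)) :: real) \<in> borel_measurable (PiM J (\<lambda>_. \<nu>))"
    "(\<lambda>\<omega>. \<Sum>k\<in>J. of_bool (snd (\<omega> k)) :: real) \<in> borel_measurable (PiM J (\<lambda>_. \<nu>))" for J
    using \<nu>(2) by (auto intro: borel_measurable_PiM_sum_count_space)
  note split_sums = nn_integral_PiM_insert_sums[OF \<nu>(1) insert.hyps,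
      where c="\<lambda>z. of_bool (fst z)" and d="\<lambda>z. of_bool (snd z)"]
  have split_h: "(\<integral>\<^sup>+\<omega>. ennreal (h (\<Sum>k\<in>insert i I. of_bool (fst (\<omega> k)))) \<partial>PiM (insert i I) (\<lambda>_. \<nu>))
      = (\<integral>\<^sup>+x. ennreal (H (a x)) \<partial>PiM I (\<lambda>_. \<nu>))"
    using split_sums[where F="\<lambda>s r. ennreal (h s)"] insert.prems(2) unfolding H_def a_def
    by (auto intro!: nn_integral_cong nn_integral_eq_integral int)
  have split_g: "(\<integral>\<^sup>+\<omega>. ennreal (g (\<Sum>k\<in>insert i I. of_bool (snd (\<omega> k)))) \<partial>PiM (insert i I) (\<lambda>_. \<nu>))
      = (\<integral>\<^sup>+x. ennreal (G (b x)) \<partial>PiM I (\<lambda>_. \<nu>))"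
    using split_sums[where F="\<lambda>s r. ennreal (g r)"] insert.prems(3) unfolding G_def b_def
    by (auto intro!: nn_integral_cong nn_integral_eq_integral int)
  have "(\<integral>\<^sup>+\<omega>. ennreal (h (\<Sum>k\<in>insert i I. of_bool (fst (\<omega> k))) * g (\<Sum>k\<in>insert i I. of_bool (snd (\<omega> k))))
          \<partial>PiM (insert i I) (\<lambda>_. \<nu>))
      = (\<integral>\<^sup>+x. (\<integral>\<^sup>+y. ennreal (h (of_bool (fst y) + a x) * g (of_bool (snd y) + b x)) \<partial>\<nu>) \<partial>PiM I (\<lambda>_. \<nu>))"
    unfolding a_def b_def by (rule split_sums) measurable
  also have "\<dots> = (\<integral>\<^sup>+x. ennreal (\<integral>y. h (of_bool (fst y) + a x) * g (of_bool (snd y) + b x) \<partial>\<nu>) \<partial>PiM I (\<lambda>_. \<nu>))"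
    using insert.prems(2,3) by (intro nn_integral_cong nn_integral_eq_integral int) auto
  also have "\<dots> \<le> (\<integral>\<^sup>+x. ennreal (H (a x) * G (b x)) \<partial>PiM I (\<lambda>_. \<nu>))"
    by (intro nn_integral_mono ennreal_leI pair)
  also have "\<dots> \<le> (\<integral>\<^sup>+x. ennreal (H (a x)) \<partial>PiM I (\<lambda>_. \<nu>)) * (\<integral>\<^sup>+x. ennreal (G (b x)) \<partial>PiM I (\<lambda>_. \<nu>))"
    unfolding a_def b_def by (rule insert.IH[OF HG H0 G0])
  finally show ?case
    unfolding split_h split_g .
qed

section \<open>Unions of pairwise negatively correlated events\<close>

lemma (in finite_measure) integrable_indicator_real:
  "A \<in> sets M \<Longrightarrow> integrable M (indicator A :: 'a \<Rightarrow> real)"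
  by (simp add: emeasure_finite less_top[symmetric])

lemma (in prob_space) second_moment_indicator_sum_le:
  assumes "finite J" and A: "\<And>j. j \<in> J \<Longrightarrow> A j \<in> events"
    and neg: "\<And>i j. i \<in> J \<Longrightarrow> j \<in> J \<Longrightarrow> i \<noteq> j \<Longrightarrow> prob (A i \<inter> A j) \<le> prob (A i) * prob (A j)"
  shows "(\<integral>x. (\<Sum>j\<in>J. indicator (A j) x)\<^sup>2 \<partial>M) \<le> (\<Sum>j\<in>J. prob (A j)) + (\<Sum>j\<in>J. prob (A j))\<^sup>2"
proof -
  have sq: "(\<Sum>j\<in>J. indicator (A j) x :: real)\<^sup>2 = (\<Sum>i\<in>J. \<Sum>j\<in>J. indicator (A i \<inter> A j) x)" for x
    by (simp add: power2_eq_square sum_product indicator_inter_arith)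
  have "(\<integral>x. (\<Sum>j\<in>J. indicator (A j) x)\<^sup>2 \<partial>M) = (\<Sum>i\<in>J. \<Sum>j\<in>J. prob (A i \<inter> A j))"
    unfolding sq using A by (simp add: integrable_indicator_real integral_sum integrable_sum)
  also have "\<dots> \<le> (\<Sum>i\<in>J. \<Sum>j\<in>J. (if i = j then prob (A i) else 0) + prob (A i) * prob (A j))"
    using neg by (intro sum_mono) auto
  also have "\<dots> = (\<Sum>j\<in>J. prob (A j)) + (\<Sum>j\<in>J. prob (A j))\<^sup>2"
    using \<open>finite J\<close> by (simp add: sum.distrib sum_product power2_eq_square)
  finally show ?thesis .
qed

text \<open>Second-moment method: with \<open>C\<close> the number of events that occur,
  \<open>l C - l\<^sup>2 C\<^sup>2 / 4\<close> is at most the indicator of the union for every \<open>l\<close>;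
  taking expectations and \<open>l = 2 / (1 + s)\<close> gives the bound.\<close>
lemma (in prob_space) prob_union_ge_of_neg_correlated:
  assumes "finite J" and A: "\<And>j. j \<in> J \<Longrightarrow> A j \<in> events"
    and neg: "\<And>i j. i \<in> J \<Longrightarrow> j \<in> J \<Longrightarrow> i \<noteq> j \<Longrightarrow> prob (A i \<inter> A j) \<le> prob (A i) * prob (A j)"
  defines "s \<equiv> \<Sum>j\<in>J. prob (A j)"
  shows "s / (1 + s) \<le> prob (\<Union>j\<in>J. A j)"
proof -
  define C where "C x = (\<Sum>j\<in>J. indicator (A j) x :: real)" for x
  define l where "l = 2 / (1 + s)"
  have "0 \<le> s"
    unfolding s_def by (simp add: sum_nonneg)
  have U: "(\<Union>j\<in>J. A j) \<in> events"
    using \<open>finite J\<close> A by auto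
  have int: "integrable M C" "integrable M (\<lambda>x. (C x)\<^sup>2)"
    unfolding C_def power2_eq_square sum_product using A
    by (auto simp: indicator_inter_arith[symmetric] integrable_indicator_real)
  have "(\<integral>x. C x \<partial>M) = s"
    unfolding C_def s_def using A by (simp add: integral_sum integrable_indicator_real)
  have pointwise: "l * C x - l\<^sup>2 / 4 * (C x)\<^sup>2 \<le> indicator (\<Union>j\<in>J. A j) x" for x
  proof (cases "x \<in> (\<Union>j\<in>J. A j)")
    case True
    have "0 \<le> (l * C x - 2)\<^sup>2"
      by simp
    then have "l * C x - l\<^sup>2 / 4 * (C x)\<^sup>2 \<le> 1"
      unfolding power2_eq_square by (simp add: algebra_simps)
    then show ?thesis
      using True by simp
  next
    case False
    then have "C x = 0"
      unfolding C_def by (auto intro!: sum.neutral)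
    then show ?thesis
      using False by simp
  qed
  have "s / (1 + s) = l * s - l\<^sup>2 / 4 * (s + s\<^sup>2)"
    using \<open>0 \<le> s\<close> unfolding l_def by (simp add: field_simps power2_eq_square add_nonneg_eq_0_iff)
  also have "\<dots> \<le> l * s - l\<^sup>2 / 4 * (\<integral>x. (C x)\<^sup>2 \<partial>M)"
    using second_moment_indicator_sum_le[OF assms(1-3)] unfolding C_def s_def
    by (simp add: mult_left_mono)
  also have "\<dots> = (\<integral>x. l * C x - l\<^sup>2 / 4 * (C x)\<^sup>2 \<partial>M)"
    using int \<open>(\<integral>x. C x \<partial>M) = s\<close> by simp
  also have "\<dots> \<le> (\<integral>x. indicator (\<Union>j\<in>J. A j) x \<partial>M)"
    using int U by (intro Bochner_Integration.integral_mono pointwise integrable_indicator_real) simp_all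
  also have "\<dots> = prob (\<Union>j\<in>J. A j)"
    using U by simp
  finally show ?thesis .
qed

lemma measure_union_le_twice_of_neg_correlated:
  fixes E E' :: "nat \<Rightarrow> _ set"
  assumes "prob_space M" "prob_space M'"
    and E: "\<And>j. E j \<in> sets M" and E': "\<And>j. E' j \<in> sets M'"
    and same_marginals: "\<And>j. measure M' (E' j) = measure M (E j)"
    and neg: "\<And>i j. i \<noteq> j \<Longrightarrow> measure M (E i \<inter> E j) \<le> measure M (E i) * measure M (E j)"
  shows "measure M' (\<Union>j. E' j) \<le> 2 * measure M (\<Union>j. E j)"
proof -
  interpret M: prob_space M by fact
  interpret M': prob_space M' by fact
  have finite_unions: "measure M' (\<Union>j<N. E' j) \<le> 2 * measure M (\<Union>j. E j)" for N
  proof -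
    define s where "s = (\<Sum>j<N. measure M (E j))"
    have "0 \<le> s"
      unfolding s_def by (simp add: sum_nonneg)
    have "measure M' (\<Union>j<N. E' j) \<le> min 1 s"
      using M'.finite_measure_subadditive_finite[of "{..<N}" E'] E' same_marginals
      unfolding s_def by auto
    also have "\<dots> \<le> 2 * (s / (1 + s))"
      using \<open>0 \<le> s\<close> by (auto simp: min_def field_simps mult_left_le)
    also have "\<dots> \<le> 2 * measure M (\<Union>j<N. E j)"
      unfolding s_def using E neg by (intro mult_left_mono M.prob_union_ge_of_neg_correlated) auto
    also have "\<dots> \<le> 2 * measure M (\<Union>j. E j)"
      using E by (intro mult_left_mono M.finite_measure_mono) auto
    finally show ?thesis .
  qed
  have "(\<lambda>N. measure M' (\<Union>j<N. E' j)) \<longlonglongrightarrow> measure M' (\<Union>N. \<Union>j<N. E' j)"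
    using E' by (intro M'.finite_Lim_measure_incseq) (auto simp: incseq_def intro: less_le_trans)
  moreover have "(\<Union>N. \<Union>j<N. E' j) = (\<Union>j. E' j)"
    by blast
  ultimately show ?thesis
    using finite_unions by (auto intro: LIMSEQ_le_const2)
qed

section \<open>Comparing expectations through tail probabilities\<close>

lemma (in sigma_finite_measure) borel_measurable_emeasure_tail:
  fixes Z :: "'a \<Rightarrow> real"
  assumes [measurable]: "Z \<in> borel_measurable M"
  shows "(\<lambda>t. emeasure M {x \<in> space M. t < Z x}) \<in> borel_measurable borel"
proof -
  have "{(t, x). t < Z x} \<inter> space (borel \<Otimes>\<^sub>M M) \<in> sets (borel \<Otimes>\<^sub>M M)"
    by measurable
  from measurable_emeasure_Pair[OF this] show ?thesis
    by (simp add: space_pair_measure vimage_def Int_def conj_commute)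
qed

lemma nn_integral_layer_cake:
  fixes Z :: "'a \<Rightarrow> real"
  assumes "sigma_finite_measure M" and [measurable]: "Z \<in> borel_measurable M" and "\<And>x. 0 \<le> Z x"
  shows "(\<integral>\<^sup>+x. Z x \<partial>M) = (\<integral>\<^sup>+t. indicator {0<..} t * emeasure M {x \<in> space M. t < Z x} \<partial>lborel)"
proof -
  interpret pair_sigma_finite M lborel
    using assms(1) by (simp add: pair_sigma_finite_def lborel.sigma_finite_measure_axioms)
  have "(\<integral>\<^sup>+x. Z x \<partial>M) = (\<integral>\<^sup>+x. (\<integral>\<^sup>+t. (if 0 < t \<and> t < Z x then 1 else 0) \<partial>lborel) \<partial>M)"
  proof (intro nn_integral_cong)
    fix x
    have "(\<integral>\<^sup>+t. (if 0 < t \<and> t < Z x then 1 else 0) \<partial>lborel) = (\<integral>\<^sup>+t. indicator {0<..<Z x} t \<partial>lborel)"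
      by (intro nn_integral_cong) (auto simp: indicator_def)
    then show "ennreal (Z x) = (\<integral>\<^sup>+t. (if 0 < t \<and> t < Z x then 1 else 0) \<partial>lborel)"
      using assms(3)[of x] by simp
  qed
  also have "\<dots> = (\<integral>\<^sup>+t. (\<integral>\<^sup>+x. (if 0 < t \<and> t < Z x then 1 else 0) \<partial>M) \<partial>lborel)"
    by (rule Fubini'[symmetric]) measurable
  also have "\<dots> = (\<integral>\<^sup>+t. indicator {0<..} t * emeasure M {x \<in> space M. t < Z x} \<partial>lborel)"
  proof (intro nn_integral_cong)
    fix t :: real
    have "(\<integral>\<^sup>+x. (if 0 < t \<and> t < Z x then 1 else 0) \<partial>M)
        = (\<integral>\<^sup>+x. indicator {0<..} t * indicator {x \<in> space M. t < Z x} x \<partial>M)"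
      by (intro nn_integral_cong) (auto simp: indicator_def)
    then show "(\<integral>\<^sup>+x. (if 0 < t \<and> t < Z x then 1 else 0) \<partial>M)
        = indicator {0<..} t * emeasure M {x \<in> space M. t < Z x}"
      by (simp add: nn_integral_cmult_indicator)
  qed
  finally show ?thesis .
qed

lemma integral_le_of_tail_le:
  fixes Z :: "'a \<Rightarrow> real" and Z' :: "'b \<Rightarrow> real"
  assumes "finite_measure M" "finite_measure M'"
    and "integrable M Z" "integrable M' Z'" "\<And>x. 0 \<le> Z x" "\<And>x. 0 \<le> Z' x" and "0 \<le> c"
    and tail: "\<And>t. 0 < t \<Longrightarrow> measure M' {x \<in> space M'. t < Z' x} \<le> c * measure M {x \<in> space M. t < Z x}"
  shows "(\<integral>x. Z' x \<partial>M') \<le> c * (\<integral>x. Z x \<partial>M)"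
proof -
  interpret M: finite_measure M by fact
  interpret M': finite_measure M' by fact
  have [measurable]: "Z \<in> borel_measurable M" "Z' \<in> borel_measurable M'"
    using assms(3,4) by auto
  have "ennreal (\<integral>x. Z' x \<partial>M') = (\<integral>\<^sup>+x. Z' x \<partial>M')"
    using assms(4,6) by (simp add: nn_integral_eq_integral)
  also have "\<dots> = (\<integral>\<^sup>+t. indicator {0<..} t * emeasure M' {x \<in> space M'. t < Z' x} \<partial>lborel)"
    using assms(6) by (intro nn_integral_layer_cake M'.sigma_finite_measure_axioms) auto
  also have "\<dots> \<le> (\<integral>\<^sup>+t. ennreal c * (indicator {0<..} t * emeasure M {x \<in> space M. t < Z x}) \<partial>lborel)"
  proof (intro nn_integral_mono)
    fix t :: real
    show "indicator {0<..} t * emeasure M' {x \<in> space M'. t < Z' x}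
        \<le> ennreal c * (indicator {0<..} t * emeasure M {x \<in> space M. t < Z x})"
      using tail[of t] \<open>0 \<le> c\<close>
      by (auto simp: indicator_def M.emeasure_eq_measure M'.emeasure_eq_measure ennreal_mult[symmetric]
          intro: ennreal_leI)
  qed
  also have "\<dots> = ennreal c * (\<integral>\<^sup>+t. indicator {0<..} t * emeasure M {x \<in> space M. t < Z x} \<partial>lborel)"
    using M.borel_measurable_emeasure_tail[of Z] by (intro nn_integral_cmult) measurable
  also have "\<dots> = ennreal c * (\<integral>\<^sup>+x. Z x \<partial>M)"
    using assms(5) by (simp add: nn_integral_layer_cake M.sigma_finite_measure_axioms)
  also have "\<dots> = ennreal (c * (\<integral>x. Z x \<partial>M))"
    using assms(3,5,7) by (simp add: nn_integral_eq_integral ennreal_mult)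
  finally show ?thesis
    using assms(5,7) by (simp add: ennreal_le_iff)
qed

section \<open>Samples from the cube and the product version\<close>

lemma measurable_cube_coord:
  assumes "sets \<rho> = sets cube"
  shows "(\<lambda>x. x j) \<in> measurable \<rho> (count_space UNIV)"
  unfolding measurable_cong_sets[OF assms refl] cube_def
  by (rule measurable_component_singleton) simp

lemma measurable_cube_coord_pair:
  assumes "sets \<rho> = sets cube"
  shows "(\<lambda>x. (x a, x b)) \<in> measurable \<rho> (count_space UNIV)"
proof -
  have "count_space (UNIV :: (bool \<times> bool) set) = count_space UNIV \<Otimes>\<^sub>M count_space UNIV"
    by (subst pair_measure_countable) auto
  then show ?thesis
    using measurable_cube_coord[OF assms] by (simp add: measurable_Pair)
qed

lemma measurable_PiM_iid_map:
  assumes "\<phi> \<in> measurable \<rho> (count_space UNIV)"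
  shows "(\<lambda>xs. \<lambda>i\<in>I. \<phi> (xs i)) \<in> measurable (PiM I (\<lambda>_. \<rho>)) (PiM I (\<lambda>_. distr \<rho> (count_space UNIV) \<phi>))"
proof (intro measurable_restrict)
  fix i assume "i \<in> I"
  moreover have "\<phi> \<in> measurable \<rho> (distr \<rho> (count_space UNIV) \<phi>)"
    using assms by (simp add: measurable_cong_sets[OF refl sets_distr])
  ultimately show "(\<lambda>xs. \<phi> (xs i)) \<in> measurable (PiM I (\<lambda>_. \<rho>)) (distr \<rho> (count_space UNIV) \<phi>)"
    by (intro measurable_compose[OF measurable_component_singleton])
qed

lemma distr_PiM_iid_map:
  assumes "prob_space \<rho>" "\<phi> \<in> measurable \<rho> (count_space UNIV)" "finite I"
  shows "distr (PiM I (\<lambda>_. \<rho>)) (PiM I (\<lambda>_. distr \<rho> (count_space UNIV) \<phi>)) (\<lambda>xs. \<lambda>i\<in>I. \<phi> (xs i))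
       = PiM I (\<lambda>_. distr \<rho> (count_space UNIV) \<phi>)"
proof -
  let ?\<nu> = "distr \<rho> (count_space UNIV) \<phi>"
  have "\<phi> \<in> measurable \<rho> ?\<nu>"
    using assms(2) by (simp add: measurable_cong_sets[OF refl sets_distr])
  moreover have "distr \<rho> ?\<nu> \<phi> = ?\<nu>"
    by (rule distr_cong) auto
  moreover have "(\<lambda>xs. \<lambda>i\<in>I. \<phi> (xs i)) = compose I \<phi>"
    by (simp add: fun_eq_iff compose_def)
  ultimately show ?thesis
    using distr_PiM_finite_prob_space'[OF assms(3), of "\<lambda>_. \<rho>" "\<lambda>_. ?\<nu>" \<phi>] assms(1,2)
    by (simp add: prob_space.prob_space_distr)
qed

lemma nn_integral_PiM_iid_map:
  assumes "prob_space \<rho>" "\<phi> \<in> measurable \<rho> (count_space UNIV)" "finite I"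
    and "F \<in> borel_measurable (PiM I (\<lambda>_. distr \<rho> (count_space UNIV) \<phi>))"
  shows "(\<integral>\<^sup>+\<omega>. F \<omega> \<partial>PiM I (\<lambda>_. distr \<rho> (count_space UNIV) \<phi>))
       = (\<integral>\<^sup>+xs. F (\<lambda>i\<in>I. \<phi> (xs i)) \<partial>PiM I (\<lambda>_. \<rho>))"
proof -
  have "(\<integral>\<^sup>+\<omega>. F \<omega> \<partial>distr (PiM I (\<lambda>_. \<rho>)) (PiM I (\<lambda>_. distr \<rho> (count_space UNIV) \<phi>))
                   (\<lambda>xs. \<lambda>i\<in>I. \<phi> (xs i)))
      = (\<integral>\<^sup>+xs. F (\<lambda>i\<in>I. \<phi> (xs i)) \<partial>PiM I (\<lambda>_. \<rho>))"
    by (rule nn_integral_distr[OF measurable_PiM_iid_map[OF assms(2)]])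
       (simp add: distr_PiM_iid_map assms)
  then show ?thesis
    by (simp add: distr_PiM_iid_map assms)
qed

lemma measure_PiM_iid_map:
  assumes "prob_space \<rho>" "\<phi> \<in> measurable \<rho> (count_space UNIV)" "finite I"
    and "C \<in> sets (PiM I (\<lambda>_. distr \<rho> (count_space UNIV) \<phi>))"
  shows "measure (PiM I (\<lambda>_. distr \<rho> (count_space UNIV) \<phi>)) C
       = measure (PiM I (\<lambda>_. \<rho>)) {xs \<in> space (PiM I (\<lambda>_. \<rho>)). (\<lambda>i\<in>I. \<phi> (xs i)) \<in> C}"
  using measure_distr[OF measurable_PiM_iid_map[OF assms(2)] assms(4)] assms
  by (simp add: distr_PiM_iid_map vimage_def Collect_conj_eq Int_commute)

lemma sets_product_version: "sets (product_version \<mu>) = sets cube"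
  unfolding product_version_def cube_def by (rule sets_PiM_cong) simp_all

lemma prob_space_product_version:
  assumes "prob_space \<mu>" "sets \<mu> = sets cube"
  shows "prob_space (product_version \<mu>)"
  unfolding product_version_def
  using assms by (intro prob_space_PiM prob_space.prob_space_distr measurable_cube_coord)

lemma distr_product_version_coord:
  assumes "prob_space \<mu>" "sets \<mu> = sets cube"
  shows "distr (product_version \<mu>) (count_space UNIV) (\<lambda>x. x j) = distr \<mu> (count_space UNIV) (\<lambda>x. x j)"
proof -
  let ?\<nu> = "\<lambda>j. distr \<mu> (count_space UNIV) (\<lambda>x. x j)"
  have "distr (product_version \<mu>) (count_space UNIV) (\<lambda>x. x j) = distr (product_version \<mu>) (?\<nu> j) (\<lambda>x. x j)"
    by (rule distr_cong) auto
  also have "\<dots> = ?\<nu> j"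
    unfolding product_version_def using assms
    by (intro distr_PiM_component prob_space.prob_space_distr measurable_cube_coord) auto
  finally show ?thesis .
qed

lemma coord_mean_eq_integral_distr:
  assumes "sets \<rho> = sets cube"
  shows "coord_mean \<rho> j = (\<integral>b. of_bool b \<partial>distr \<rho> (count_space UNIV) (\<lambda>x. x j))"
  unfolding coord_mean_def by (rule integral_distr[symmetric, OF measurable_cube_coord[OF assms]]) simp

lemma coord_mean_product_version:
  assumes "prob_space \<mu>" "sets \<mu> = sets cube"
  shows "coord_mean (product_version \<mu>) = coord_mean \<mu>"
  using assms by (simp add: fun_eq_iff coord_mean_eq_integral_distr sets_product_version
      distr_product_version_coord)

lemma coord_mean_bounds:
  assumes "prob_space \<rho>" "sets \<rho> = sets cube"
  shows "coord_mean \<rho> j \<in> {0..1}"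
proof -
  interpret prob_space \<rho> by fact
  have "(\<lambda>x. of_bool (x j) :: real) \<in> borel_measurable \<rho>"
    using measurable_cube_coord[OF assms(2)] by (rule measurable_compose) simp
  then have "integrable \<rho> (\<lambda>x. of_bool (x j) :: real)"
    by (intro integrable_const_bound[where B=1]) auto
  then show ?thesis
    unfolding coord_mean_def by (auto intro: integral_le_const)
qed

lemma nn_integral_coord_counts_neg_assoc:
  fixes \<rho> :: "(nat \<Rightarrow> bool) measure" and h g :: "real \<Rightarrow> real"
  assumes \<rho>: "prob_space \<rho>" "sets \<rho> = sets cube" and "neg_correlated \<rho>" "a \<noteq> b" "finite I"
    and hg: "(mono h \<and> mono g) \<or> (antimono h \<and> antimono g)" "\<And>s. 0 \<le> h s" "\<And>s. 0 \<le> g s"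
  shows "(\<integral>\<^sup>+xs. ennreal (h (\<Sum>i\<in>I. of_bool (xs i a)) * g (\<Sum>i\<in>I. of_bool (xs i b))) \<partial>PiM I (\<lambda>_. \<rho>))
         \<le> (\<integral>\<^sup>+xs. ennreal (h (\<Sum>i\<in>I. of_bool (xs i a))) \<partial>PiM I (\<lambda>_. \<rho>))
           * (\<integral>\<^sup>+xs. ennreal (g (\<Sum>i\<in>I. of_bool (xs i b))) \<partial>PiM I (\<lambda>_. \<rho>))"
proof -
  define \<nu> where "\<nu> = distr \<rho> (count_space UNIV) (\<lambda>x. (x a, x b))"
  have \<phi>: "(\<lambda>x. (x a, x b)) \<in> measurable \<rho> (count_space UNIV)"
    by (rule measurable_cube_coord_pair[OF \<rho>(2)])
  have \<nu>: "prob_space \<nu>" "sets \<nu> = sets (count_space UNIV)"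
    unfolding \<nu>_def using prob_space.prob_space_distr[OF \<rho>(1) \<phi>] by auto
  have neg_cov: "(\<integral>z. (of_bool (fst z) * of_bool (snd z) :: real) \<partial>\<nu>)
                   \<le> (\<integral>z. of_bool (fst z) \<partial>\<nu>) * (\<integral>z. of_bool (snd z) \<partial>\<nu>)"
    using assms(3,4) unfolding neg_correlated_def coord_mean_def \<nu>_def
    by (simp add: integral_distr[OF \<phi>])
  note pair_law = nn_integral_PiM_iid_map[OF \<rho>(1) \<phi> assms(5), folded \<nu>_def]
  have [measurable]: "h \<in> borel_measurable borel" "g \<in> borel_measurable borel"
    using hg(1) by (auto intro: borel_measurable_mono_or_antimono)
  have [measurable]: "(\<lambda>\<omega>. \<Sum>k\<in>I. of_bool (fst (\<omega> k)) :: real) \<in> borel_measurable (PiM I (\<lambda>_. \<nu>))"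
    "(\<lambda>\<omega>. \<Sum>k\<in>I. of_bool (snd (\<omega> k)) :: real) \<in> borel_measurable (PiM I (\<lambda>_. \<nu>))"
    using \<nu>(2) by (auto intro: borel_measurable_PiM_sum_count_space)
  have "(\<integral>\<^sup>+\<omega>. ennreal (h (\<Sum>k\<in>I. of_bool (fst (\<omega> k))) * g (\<Sum>k\<in>I. of_bool (snd (\<omega> k)))) \<partial>PiM I (\<lambda>_. \<nu>))
      \<le> (\<integral>\<^sup>+\<omega>. ennreal (h (\<Sum>k\<in>I. of_bool (fst (\<omega> k)))) \<partial>PiM I (\<lambda>_. \<nu>))
        * (\<integral>\<^sup>+\<omega>. ennreal (g (\<Sum>k\<in>I. of_bool (snd (\<omega> k)))) \<partial>PiM I (\<lambda>_. \<nu>))"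
    by (rule nn_integral_PiM_sums_neg_assoc[OF \<nu> neg_cov assms(5) hg])
  then show ?thesis
    by (simp add: pair_law cong: sum.cong)
qed

lemma measure_PiM_coord_count_eq:
  fixes P :: "real \<Rightarrow> bool"
  assumes \<rho>: "prob_space \<rho>" "sets \<rho> = sets cube" and \<rho>': "prob_space \<rho>'" "sets \<rho>' = sets cube"
    and same_marginal: "distr \<rho>' (count_space UNIV) (\<lambda>x. x j) = distr \<rho> (count_space UNIV) (\<lambda>x. x j)"
    and "finite I" and "Measurable.pred borel P"
  shows "measure (PiM I (\<lambda>_. \<rho>')) {xs \<in> space (PiM I (\<lambda>_. \<rho>')). P (\<Sum>i\<in>I. of_bool (xs i j))}
       = measure (PiM I (\<lambda>_. \<rho>)) {xs \<in> space (PiM I (\<lambda>_. \<rho>)). P (\<Sum>i\<in>I. of_bool (xs i j))}"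
proof -
  let ?\<nu> = "distr \<rho> (count_space UNIV) (\<lambda>x. x j)"
  define C where "C = {\<omega> \<in> space (PiM I (\<lambda>_. ?\<nu>)). P (\<Sum>i\<in>I. of_bool (\<omega> i))}"
  have count: "(\<lambda>\<omega>. \<Sum>i\<in>I. of_bool (\<omega> i) :: real) \<in> borel_measurable (PiM I (\<lambda>_. ?\<nu>))"
    by (intro borel_measurable_PiM_sum_count_space) simp
  have "Measurable.pred (PiM I (\<lambda>_. ?\<nu>)) (\<lambda>\<omega>. P (\<Sum>i\<in>I. of_bool (\<omega> i)))"
    using measurable_compose[OF count assms(7)] .
  then have "C \<in> sets (PiM I (\<lambda>_. ?\<nu>))"
    unfolding C_def pred_def .
  have "measure (PiM I (\<lambda>_. \<kappa>)) {xs \<in> space (PiM I (\<lambda>_. \<kappa>)). P (\<Sum>i\<in>I. of_bool (xs i j))}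
      = measure (PiM I (\<lambda>_. ?\<nu>)) C"
    if "prob_space \<kappa>" "sets \<kappa> = sets cube" "distr \<kappa> (count_space UNIV) (\<lambda>x. x j) = ?\<nu>" for \<kappa>
    using measure_PiM_iid_map[OF that(1) measurable_cube_coord[OF that(2), of j] \<open>finite I\<close>,
        unfolded that(3), OF \<open>C \<in> sets _\<close>]
    by (simp add: C_def space_PiM PiE_def cong: sum.cong)
  from this[OF \<rho>' same_marginal] this[OF \<rho> refl] show ?thesis
    by simp
qed

section \<open>Maximal deviations of empirical means\<close>

definition sample_dev :: "nat \<Rightarrow> (nat \<Rightarrow> real) \<Rightarrow> nat \<Rightarrow> (nat \<Rightarrow> nat \<Rightarrow> bool) \<Rightarrow> real" where
  "sample_dev n p j xs = (\<Sum>i<n. of_bool (xs i j)) / real n - p j"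

definition max_dev :: "nat \<Rightarrow> (nat \<Rightarrow> real) \<Rightarrow> (nat \<Rightarrow> nat \<Rightarrow> bool) \<Rightarrow> real" where
  "max_dev n p xs = (SUP j. \<bar>sample_dev n p j xs\<bar>)"

definition one_sided_max_dev :: "nat \<Rightarrow> (nat \<Rightarrow> real) \<Rightarrow> real \<Rightarrow> (nat \<Rightarrow> nat \<Rightarrow> bool) \<Rightarrow> real" where
  "one_sided_max_dev n p \<sigma> xs = (SUP j. max 0 (\<sigma> * sample_dev n p j xs))"

lemma Delta_eq_integral_max_dev:
  "Delta n \<mu> = (\<integral>xs. max_dev n (coord_mean \<mu>) xs \<partial>PiM {..<n} (\<lambda>_. \<mu>))"
  unfolding Delta_def max_dev_def sample_dev_def ..

lemma abs_sample_dev_le_1: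
  assumes "p j \<in> {0..1}"
  shows "\<bar>sample_dev n p j xs\<bar> \<le> 1"
proof -
  have "(\<Sum>i<n. of_bool (xs i j)) \<le> (\<Sum>i<n. 1 :: real)"
    by (intro sum_mono) simp
  then have "0 \<le> (\<Sum>i<n. of_bool (xs i j)) / real n" "(\<Sum>i<n. of_bool (xs i j)) / real n \<le> 1"
    by (auto simp: sum_nonneg divide_le_eq_1 simp del: sum_of_bool_eq)
  then show ?thesis
    using assms unfolding sample_dev_def by (auto simp del: sum_of_bool_eq)
qed

lemma
  assumes "\<And>j. p j \<in> {0..1}"
  shows bdd_above_abs_sample_dev: "bdd_above (range (\<lambda>j. \<bar>sample_dev n p j xs\<bar>))"
    and bdd_above_one_sided_sample_dev: "bdd_above (range (\<lambda>j. max 0 (\<sigma> * sample_dev n p j xs)))"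
proof -
  show "bdd_above (range (\<lambda>j. \<bar>sample_dev n p j xs\<bar>))"
    using abs_sample_dev_le_1[OF assms] by (intro bdd_aboveI[where M=1]) auto
  have "\<bar>\<sigma> * sample_dev n p j xs\<bar> \<le> \<bar>\<sigma>\<bar>" for j
    using abs_sample_dev_le_1[OF assms] by (simp add: abs_mult mult_left_le)
  then have "\<sigma> * sample_dev n p j xs \<le> \<bar>\<sigma>\<bar>" for j
    by (metis abs_ge_self order_trans)
  then show "bdd_above (range (\<lambda>j. max 0 (\<sigma> * sample_dev n p j xs)))"
    by (intro bdd_aboveI[where M="\<bar>\<sigma>\<bar>"]) auto
qed

lemma max_dev_bounds:
  assumes "\<And>j. p j \<in> {0..1}"
  shows "0 \<le> max_dev n p xs" "max_dev n p xs \<le> 1"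
  unfolding max_dev_def
  using abs_sample_dev_le_1[OF assms] bdd_above_abs_sample_dev[OF assms]
  by (auto intro: cSUP_upper2 cSUP_least)

lemma one_sided_max_dev_bounds:
  assumes "\<And>j. p j \<in> {0..1}"
  shows "0 \<le> one_sided_max_dev n p \<sigma> xs" "one_sided_max_dev n p \<sigma> xs \<le> \<bar>\<sigma>\<bar>"
proof -
  show "0 \<le> one_sided_max_dev n p \<sigma> xs"
    unfolding one_sided_max_dev_def using bdd_above_one_sided_sample_dev[OF assms]
    by (rule cSUP_upper2[where x=0]) auto
  have "\<bar>\<sigma> * sample_dev n p j xs\<bar> \<le> \<bar>\<sigma>\<bar>" for j
    using abs_sample_dev_le_1[OF assms] by (simp add: abs_mult mult_left_le)
  then show "one_sided_max_dev n p \<sigma> xs \<le> \<bar>\<sigma>\<bar>"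
    unfolding one_sided_max_dev_def by (intro cSUP_least) (auto simp: abs_le_iff)
qed

lemma max_dev_le_one_sided_max_dev_sum:
  assumes "\<And>j. p j \<in> {0..1}"
  shows "max_dev n p xs \<le> one_sided_max_dev n p 1 xs + one_sided_max_dev n p (-1) xs"
  unfolding max_dev_def
proof (intro cSUP_least)
  fix j
  have "max 0 (\<sigma> * sample_dev n p j xs) \<le> one_sided_max_dev n p \<sigma> xs" for \<sigma>
    unfolding one_sided_max_dev_def using bdd_above_one_sided_sample_dev[OF assms]
    by (intro cSUP_upper) auto
  from this[of 1] this[of "-1"]
  show "\<bar>sample_dev n p j xs\<bar> \<le> one_sided_max_dev n p 1 xs + one_sided_max_dev n p (-1) xs"
    by (auto simp: abs_if)
qed simp

lemma one_sided_max_dev_le_max_dev: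
  assumes "\<And>j. p j \<in> {0..1}" and "\<bar>\<sigma>\<bar> \<le> 1"
  shows "one_sided_max_dev n p \<sigma> xs \<le> max_dev n p xs"
  unfolding one_sided_max_dev_def
proof (intro cSUP_least)
  fix j
  have "\<bar>sample_dev n p j xs\<bar> \<le> max_dev n p xs"
    unfolding max_dev_def using bdd_above_abs_sample_dev[OF assms(1)] by (intro cSUP_upper) auto
  moreover have "\<sigma> * sample_dev n p j xs \<le> \<bar>\<sigma>\<bar> * \<bar>sample_dev n p j xs\<bar>"
    by (metis abs_ge_self abs_mult)
  moreover have "\<bar>\<sigma>\<bar> * \<bar>sample_dev n p j xs\<bar> \<le> \<bar>sample_dev n p j xs\<bar>"
    using assms(2) by (simp add: mult_left_le_one_le)
  ultimately show "max 0 (\<sigma> * sample_dev n p j xs) \<le> max_dev n p xs"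
    using max_dev_bounds(1)[OF assms(1)] by auto
qed simp

lemma one_sided_max_dev_gt_iff:
  assumes "\<And>j. p j \<in> {0..1}" and "0 < t"
  shows "t < one_sided_max_dev n p \<sigma> xs \<longleftrightarrow> (\<exists>j. t < \<sigma> * sample_dev n p j xs)"
  unfolding one_sided_max_dev_def
  using assms(2) by (auto simp: less_cSUP_iff[OF _ bdd_above_one_sided_sample_dev[OF assms(1)]]
      less_max_iff_disj)

lemma borel_measurable_sample_dev:
  assumes "sets \<rho> = sets cube"
  shows "sample_dev n p j \<in> borel_measurable (PiM {..<n} (\<lambda>_. \<rho>))"
proof -
  have "(\<lambda>xs. of_bool (xs i j) :: real) \<in> borel_measurable (PiM {..<n} (\<lambda>_. \<rho>))" if "i < n" for i
  proof -
    have "(\<lambda>xs. xs i j) \<in> measurable (PiM {..<n} (\<lambda>_. \<rho>)) (count_space UNIV)"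
      using that measurable_component_singleton[of i "{..<n}" "\<lambda>_. \<rho>"]
      by (intro measurable_compose[OF _ measurable_cube_coord[OF assms]]) simp
    then show ?thesis
      by (rule measurable_compose) simp
  qed
  then show ?thesis
    unfolding sample_dev_def[abs_def] by (intro borel_measurable_diff borel_measurable_divide borel_measurable_sum) auto
qed

lemma
  assumes "sets \<rho> = sets cube" and "\<And>j. p j \<in> {0..1}"
  shows borel_measurable_max_dev: "max_dev n p \<in> borel_measurable (PiM {..<n} (\<lambda>_. \<rho>))"
    and borel_measurable_one_sided_max_dev:
      "one_sided_max_dev n p \<sigma> \<in> borel_measurable (PiM {..<n} (\<lambda>_. \<rho>))"
  unfolding max_dev_def[abs_def] one_sided_max_dev_def[abs_def]
  using borel_measurable_sample_dev[OF assms(1)]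
    bdd_above_abs_sample_dev[OF assms(2)] bdd_above_one_sided_sample_dev[OF assms(2)]
  by (auto intro!: borel_measurable_cSUP)

lemma
  assumes "prob_space \<rho>" "sets \<rho> = sets cube" and "\<And>j. p j \<in> {0..1}"
  shows integrable_max_dev: "integrable (PiM {..<n} (\<lambda>_. \<rho>)) (max_dev n p)"
    and integrable_one_sided_max_dev: "integrable (PiM {..<n} (\<lambda>_. \<rho>)) (one_sided_max_dev n p \<sigma>)"
proof -
  interpret prob_space "PiM {..<n} (\<lambda>_. \<rho>)"
    using assms(1) by (intro prob_space_PiM) auto
  show "integrable (PiM {..<n} (\<lambda>_. \<rho>)) (max_dev n p)"
    using borel_measurable_max_dev[OF assms(2,3)] max_dev_bounds[OF assms(3)]
    by (intro integrable_const_bound[where B=1]) auto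
  show "integrable (PiM {..<n} (\<lambda>_. \<rho>)) (one_sided_max_dev n p \<sigma>)"
    using borel_measurable_one_sided_max_dev[OF assms(2,3)] one_sided_max_dev_bounds[OF assms(3)]
    by (intro integrable_const_bound[where B="\<bar>\<sigma>\<bar>"]) auto
qed

lemma integral_max_dev_le_one_sided_max_dev_sum:
  assumes "prob_space \<rho>" "sets \<rho> = sets cube" and "\<And>j. p j \<in> {0..1}"
  shows "(\<integral>xs. max_dev n p xs \<partial>PiM {..<n} (\<lambda>_. \<rho>))
         \<le> (\<integral>xs. one_sided_max_dev n p 1 xs \<partial>PiM {..<n} (\<lambda>_. \<rho>))
           + (\<integral>xs. one_sided_max_dev n p (-1) xs \<partial>PiM {..<n} (\<lambda>_. \<rho>))"
  using assms
  by (subst Bochner_Integration.integral_add[symmetric])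
    (auto intro!: Bochner_Integration.integral_mono integrable_max_dev integrable_one_sided_max_dev
      max_dev_le_one_sided_max_dev_sum)

lemma integral_one_sided_max_dev_le_integral_max_dev:
  assumes "prob_space \<rho>" "sets \<rho> = sets cube" and "\<And>j. p j \<in> {0..1}" and "\<bar>\<sigma>\<bar> \<le> 1"
  shows "(\<integral>xs. one_sided_max_dev n p \<sigma> xs \<partial>PiM {..<n} (\<lambda>_. \<rho>))
         \<le> (\<integral>xs. max_dev n p xs \<partial>PiM {..<n} (\<lambda>_. \<rho>))"
  using assms
  by (intro Bochner_Integration.integral_mono integrable_max_dev integrable_one_sided_max_dev
      one_sided_max_dev_le_max_dev)

lemma mono_threshold_indicator:
  fixes f :: "real \<Rightarrow> real"
  assumes "mono f" and "0 \<le> \<sigma>"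
  shows "mono (\<lambda>s. of_bool (t < \<sigma> * f s) :: real)"
proof (rule monoI)
  fix x y :: real
  assume "x \<le> y"
  then have "\<sigma> * f x \<le> \<sigma> * f y"
    using assms by (intro mult_left_mono monoD[OF assms(1)])
  then show "(of_bool (t < \<sigma> * f x) :: real) \<le> of_bool (t < \<sigma> * f y)"
    by auto
qed

lemma antimono_threshold_indicator:
  fixes f :: "real \<Rightarrow> real"
  assumes "mono f" and "\<sigma> \<le> 0"
  shows "antimono (\<lambda>s. of_bool (t < \<sigma> * f s) :: real)"
proof (rule antimonoI)
  fix x y :: real
  assume "x \<le> y"
  then have "\<sigma> * f y \<le> \<sigma> * f x"
    using assms by (intro mult_left_mono_neg monoD[OF assms(1)])
  then show "(of_bool (t < \<sigma> * f y) :: real) \<le> of_bool (t < \<sigma> * f x)"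
    by auto
qed

lemma measure_sample_dev_events_neg_correlated:
  fixes \<rho> :: "(nat \<Rightarrow> bool) measure" and n :: nat and p :: "nat \<Rightarrow> real" and \<sigma> t :: real
  assumes "prob_space \<rho>" "sets \<rho> = sets cube" "neg_correlated \<rho>" "i \<noteq> j"
  defines "M \<equiv> PiM {..<n} (\<lambda>_. \<rho>)"
    and "E \<equiv> \<lambda>k. {xs \<in> space (PiM {..<n} (\<lambda>_. \<rho>)). t < \<sigma> * sample_dev n p k xs}"
  shows "measure M (E i \<inter> E j) \<le> measure M (E i) * measure M (E j)"
proof -
  interpret M: prob_space M
    unfolding M_def using assms(1) by (intro prob_space_PiM) auto
  define h where "h k s = (of_bool (t < \<sigma> * (s / real n - p k)) :: real)" for k s
  have "mono (\<lambda>s. s / real n - q)" for q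
    by (intro monoI) (simp add: divide_right_mono)
  then have same_monotonicity: "(mono (h i) \<and> mono (h j)) \<or> (antimono (h i) \<and> antimono (h j))"
    unfolding h_def by (cases "0 \<le> \<sigma>") (auto intro: mono_threshold_indicator antimono_threshold_indicator)
  have E: "E k \<in> sets M" for k
    unfolding E_def M_def using borel_measurable_sample_dev[OF assms(2)] by measurable
  have indicator_E: "indicator (E k) xs = ennreal (h k (\<Sum>l<n. of_bool (xs l k)))" if "xs \<in> space M" for k xs
    using that by (simp add: E_def M_def h_def sample_dev_def indicator_def del: sum_of_bool_eq)
  have emeasure_E: "emeasure M (E k) = (\<integral>\<^sup>+xs. ennreal (h k (\<Sum>l<n. of_bool (xs l k))) \<partial>M)" for k
    using E[of k] by (simp add: indicator_E nn_integral_indicator[symmetric] cong: nn_integral_cong del: sum_of_bool_eq)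
  have "emeasure M (E i \<inter> E j) = (\<integral>\<^sup>+xs. indicator (E i) xs * indicator (E j) xs \<partial>M)"
    using E by (simp add: indicator_inter_arith[symmetric] sets.Int)
  also have "\<dots> = (\<integral>\<^sup>+xs. ennreal (h i (\<Sum>l<n. of_bool (xs l i)) * h j (\<Sum>l<n. of_bool (xs l j))) \<partial>M)"
    by (intro nn_integral_cong) (simp add: indicator_E ennreal_mult h_def del: sum_of_bool_eq)
  also have "\<dots> \<le> emeasure M (E i) * emeasure M (E j)"
    unfolding emeasure_E unfolding M_def
    by (rule nn_integral_coord_counts_neg_assoc[OF assms(1-4) finite_lessThan same_monotonicity])
      (simp_all add: h_def)
  finally show ?thesis
    by (simp add: M.emeasure_eq_measure ennreal_mult[symmetric] ennreal_le_iff)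
qed

lemma measure_sample_dev_event_product_version:
  assumes "prob_space \<mu>" "sets \<mu> = sets cube"
  shows "measure (PiM {..<n} (\<lambda>_. product_version \<mu>))
           {xs \<in> space (PiM {..<n} (\<lambda>_. product_version \<mu>)). t < \<sigma> * sample_dev n p j xs}
       = measure (PiM {..<n} (\<lambda>_. \<mu>)) {xs \<in> space (PiM {..<n} (\<lambda>_. \<mu>)). t < \<sigma> * sample_dev n p j xs}"
  unfolding sample_dev_def using assms
  by (intro measure_PiM_coord_count_eq[where P="\<lambda>s. t < \<sigma> * (s / real n - p j)"])
    (simp_all add: prob_space_product_version sets_product_version distr_product_version_coord)

lemma measure_one_sided_max_dev_gt_product_version_le:
  fixes \<mu> :: "(nat \<Rightarrow> bool) measure" and n :: nat
  assumes "prob_space \<mu>" "sets \<mu> = sets cube" "neg_correlated \<mu>" "0 < t"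
  defines "p \<equiv> coord_mean \<mu>"
    and "M \<equiv> PiM {..<n} (\<lambda>_. \<mu>)" and "M' \<equiv> PiM {..<n} (\<lambda>_. product_version \<mu>)"
  shows "measure M' {xs \<in> space M'. t < one_sided_max_dev n p \<sigma> xs}
         \<le> 2 * measure M {xs \<in> space M. t < one_sided_max_dev n p \<sigma> xs}"
proof -
  have p: "p j \<in> {0..1}" for j
    unfolding p_def using assms(1,2) by (rule coord_mean_bounds)
  define E where "E N j = {xs \<in> space N. t < \<sigma> * sample_dev n p j xs}"
    for N :: "(nat \<Rightarrow> nat \<Rightarrow> bool) measure" and j
  have tail_eq: "{xs \<in> space N. t < one_sided_max_dev n p \<sigma> xs} = (\<Union>j. E N j)" for N
    unfolding E_def using one_sided_max_dev_gt_iff[OF p assms(4)] by auto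
  have E_sets: "E (PiM {..<n} (\<lambda>_. \<rho>)) j \<in> sets (PiM {..<n} (\<lambda>_. \<rho>))" if "sets \<rho> = sets cube" for \<rho> j
    unfolding E_def using borel_measurable_sample_dev[OF that] by measurable
  show ?thesis
    unfolding tail_eq
  proof (rule measure_union_le_twice_of_neg_correlated)
    show "prob_space M" "prob_space M'"
      unfolding M_def M'_def using assms(1,2)
      by (auto intro!: prob_space_PiM prob_space_product_version)
    show "E M j \<in> sets M" "E M' j \<in> sets M'" for j
      unfolding M_def M'_def using assms(2) by (auto intro!: E_sets sets_product_version)
    show "measure M' (E M' j) = measure M (E M j)" for j
      unfolding E_def M_def M'_def using assms(1,2) by (rule measure_sample_dev_event_product_version)
    show "measure M (E M i \<inter> E M j) \<le> measure M (E M i) * measure M (E M j)" if "i \<noteq> j" for i j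
      unfolding E_def M_def using assms(1-3) that by (rule measure_sample_dev_events_neg_correlated)
  qed
qed

lemma integral_one_sided_max_dev_product_version_le:
  fixes \<mu> :: "(nat \<Rightarrow> bool) measure"
  assumes "prob_space \<mu>" "sets \<mu> = sets cube" "neg_correlated \<mu>"
  defines "p \<equiv> coord_mean \<mu>"
  shows "(\<integral>xs. one_sided_max_dev n p \<sigma> xs \<partial>PiM {..<n} (\<lambda>_. product_version \<mu>))
         \<le> 2 * (\<integral>xs. one_sided_max_dev n p \<sigma> xs \<partial>PiM {..<n} (\<lambda>_. \<mu>))"
proof -
  have p: "p j \<in> {0..1}" for j
    unfolding p_def using assms(1,2) by (rule coord_mean_bounds)
  have \<mu>': "prob_space (product_version \<mu>)" "sets (product_version \<mu>) = sets cube"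
    using assms(1,2) by (simp_all add: prob_space_product_version sets_product_version)
  have finite: "finite_measure (PiM {..<n} (\<lambda>_. \<mu>))" "finite_measure (PiM {..<n} (\<lambda>_. product_version \<mu>))"
    using assms(1) \<mu>'(1) by (auto intro!: prob_space_PiM prob_space.finite_measure)
  have integrable: "integrable (PiM {..<n} (\<lambda>_. \<mu>)) (one_sided_max_dev n p \<sigma>)"
    "integrable (PiM {..<n} (\<lambda>_. product_version \<mu>)) (one_sided_max_dev n p \<sigma>)"
    using assms(1,2) \<mu>' p by (auto intro: integrable_one_sided_max_dev)
  have nonneg: "0 \<le> one_sided_max_dev n p \<sigma> xs" for xs
    using p by (rule one_sided_max_dev_bounds)
  have tail: "measure (PiM {..<n} (\<lambda>_. product_version \<mu>))
          {xs \<in> space (PiM {..<n} (\<lambda>_. product_version \<mu>)). t < one_sided_max_dev n p \<sigma> xs}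
        \<le> 2 * measure (PiM {..<n} (\<lambda>_. \<mu>)) {xs \<in> space (PiM {..<n} (\<lambda>_. \<mu>)). t < one_sided_max_dev n p \<sigma> xs}"
    if "0 < t" for t
    unfolding p_def using assms(1-3) that by (rule measure_one_sided_max_dev_gt_product_version_le)
  show ?thesis
    by (rule integral_le_of_tail_le[OF finite integrable nonneg nonneg _ tail]) simp_all
qed

theorem theorem1:
  fixes \<mu> :: "(nat \<Rightarrow> bool) measure" and n :: nat
  assumes "prob_space \<mu>" and "sets \<mu> = sets cube"
    and "neg_correlated \<mu>"
    and "n \<ge> 1"
  shows "Delta n \<mu> \<ge> Delta n (product_version \<mu>) / 4"
proof -
  define p where "p = coord_mean \<mu>"
  define M M' where "M = PiM {..<n} (\<lambda>_. \<mu>)" and "M' = PiM {..<n} (\<lambda>_. product_version \<mu>)"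
  have p: "p j \<in> {0..1}" for j
    unfolding p_def using assms(1,2) by (rule coord_mean_bounds)
  have \<mu>': "prob_space (product_version \<mu>)" "sets (product_version \<mu>) = sets cube"
    using assms(1,2) by (simp_all add: prob_space_product_version sets_product_version)
  have "Delta n (product_version \<mu>) = (\<integral>xs. max_dev n p xs \<partial>M')"
    unfolding Delta_eq_integral_max_dev M'_def p_def coord_mean_product_version[OF assms(1,2)] ..
  also have "\<dots> \<le> (\<integral>xs. one_sided_max_dev n p 1 xs \<partial>M') + (\<integral>xs. one_sided_max_dev n p (-1) xs \<partial>M')"
    unfolding M'_def using \<mu>' p by (rule integral_max_dev_le_one_sided_max_dev_sum)
  also have "\<dots> \<le> 2 * (\<integral>xs. one_sided_max_dev n p 1 xs \<partial>M) + 2 * (\<integral>xs. one_sided_max_dev n p (-1) xs \<partial>M)"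
    unfolding M_def M'_def p_def
    using integral_one_sided_max_dev_product_version_le[OF assms(1-3)] by (intro add_mono)
  also have "\<dots> \<le> 2 * (\<integral>xs. max_dev n p xs \<partial>M) + 2 * (\<integral>xs. max_dev n p xs \<partial>M)"
    unfolding M_def using assms(1,2) p
    by (intro add_mono mult_left_mono integral_one_sided_max_dev_le_integral_max_dev) auto
  also have "\<dots> = 4 * Delta n \<mu>"
    unfolding Delta_eq_integral_max_dev M_def p_def by simp
  finally show ?thesis
    by simp
qed

end
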